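(* In Mahi-Mahi with wave length $w=4$: for every round $r$, there exists a block $b$ of round $r$ that has at least $2f+1$ certificates in round $r+3$.
   Context: There are $n=3f+1$ validators, at most $f$ Byzantine; every honest validator creates exactly one block in every round. Every valid block of round $r$ has as parents at least $2f+1$ blocks of round $r-1$ from distinct validators. A block $b$ of round $r'$ is a vote for a block $L$ of round $r<r'$ with author $a$ if the first block with author $a$ and round $r$ encountered in the deterministic depth-first search from $b$ along parent references is $L$. With wave length $4$, a block $c$ of round $r+3$ is a certificate for a block $L$ of round $r$ if at least $2f+1$ of $c$'s parents (blocks of round $r+2$) are votes for $L$. *)

theory Defs
  imports Main
begin

text \<open>Since every parent of a block of round k has round k-1,
a search depth of (round b) explores the whole causal history of b.\<close>

fun dfs :: "('b \<Rightarrow> 'b list) \<Rightarrow> nat \<Rightarrow> 'b \<Rightarrow> 'b list" where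
  "dfs parents 0 b = [b]"
| "dfs parents (Suc k) b = b # concat (map (dfs parents k) (parents b))"

definition is_vote ::
  "('b \<Rightarrow> 'v) \<Rightarrow> ('b \<Rightarrow> nat) \<Rightarrow> ('b \<Rightarrow> 'b list) \<Rightarrow> 'b \<Rightarrow> 'b \<Rightarrow> bool" where
  "is_vote author round parents b L \<longleftrightarrow>
     round L < round b \<and>
     find (\<lambda>x. author x = author L \<and> round x = round L) (dfs parents (round b) b) = Some L"

text \<open>Wave length 4: c (of round r+3) is a certificate for L (of round r) if at least
2f+1 of c's parents (blocks of round r+2) are votes for L.\<close>
definition is_certificate ::
  "nat \<Rightarrow> ('b \<Rightarrow> 'v) \<Rightarrow> ('b \<Rightarrow> nat) \<Rightarrow> ('b \<Rightarrow> 'b list) \<Rightarrow> 'b \<Rightarrow> 'b \<Rightarrow> bool" where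
  "is_certificate f author round parents L c \<longleftrightarrow>
     round c = round L + 3 \<and>
     2 * f + 1 \<le> card {p \<in> set (parents c). round p = round L + 2 \<and> is_vote author round parents p L}"

definition valid_dag ::
  "nat \<Rightarrow> 'v set \<Rightarrow> 'v set \<Rightarrow> 'b set \<Rightarrow> ('b \<Rightarrow> 'v) \<Rightarrow> ('b \<Rightarrow> nat) \<Rightarrow> ('b \<Rightarrow> 'b list) \<Rightarrow> bool" where
  "valid_dag f V Byz B author round parents \<longleftrightarrow>
     finite V \<and> card V = 3 * f + 1 \<and> Byz \<subseteq> V \<and> card Byz \<le> f \<and>
     (\<forall>v \<in> V - Byz. \<forall>r. \<exists>!b. b \<in> B \<and> author b = v \<and> round b = r) \<and>
     (\<forall>b \<in> B. author b \<in> V) \<and>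
     (\<forall>b \<in> B. set (parents b) \<subseteq> B) \<and>
     (\<forall>b \<in> B. \<forall>p \<in> set (parents b). round p + 1 = round b) \<and>
     (\<forall>b \<in> B. 0 < round b \<longrightarrow> 2 * f + 1 \<le> card (author ` set (parents b)))"

end

theory Submission
  imports Defs
begin

text \<open>Every honest block of round r+1 has at least f+1 honest round-r blocks among its parents,
so by double counting some honest block b of round r is a parent of the round-(r+1) blocks of a
set Q of at least f+1 honest validators. Since every block of round r+2 has parents from 2f+1
distinct validators, one of these parents is the block of a member of Q, so b is a grandparent
of every block of round r+2. The author of b is honest and has no other block of round r, hence
b is the block the depth-first search finds: every block of round r+2 votes for b, and so every
block of round r+3 is a certificate for b. There are at least 2f+1 blocks of round r+3, for
instance the parents of any honest block of round r+4.\<close>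

lemma find_eq_Some_if_unique:
  assumes "b \<in> set xs" "P b" "\<And>x. x \<in> set xs \<Longrightarrow> P x \<Longrightarrow> x = b"
  shows "find P xs = Some b"
  using assms
proof (induction xs)
  case (Cons x xs)
  show ?case
  proof (cases "P x")
    case True
    then show ?thesis
      using Cons.prems(3) by simp
  next
    case False
    then show ?thesis
      using Cons by (metis find.simps(2) list.set_intros(2) set_ConsD)
  qed
qed simp

lemma ex_in_degree_gt:
  fixes k :: nat
  assumes "finite H" "H \<noteq> {}" "\<And>u. u \<in> H \<Longrightarrow> k < card {v \<in> H. R u v}"
  shows "\<exists>v \<in> H. k < card {u \<in> H. R u v}"
proof (rule ccontr)
  assume "\<not> ?thesis"
  then have in_degree_le: "card {u \<in> H. R u v} \<le> k" if "v \<in> H" for v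
    using that by auto
  have "(\<Sum>u \<in> H. k) < (\<Sum>u \<in> H. card {v \<in> H. R u v})"
    using assms by (intro sum_strict_mono) auto
  also have "\<dots> = (\<Sum>v \<in> H. card {u \<in> H. R u v})"
    using assms(1) by (intro sum_multicount_gen) auto
  also have "\<dots> \<le> (\<Sum>v \<in> H. k)"
    using in_degree_le by (intro sum_mono)
  finally show False by simp
qed

lemma self_in_dfs: "b \<in> set (dfs parents k b)"
  by (cases k) auto

lemma grandparent_in_dfs:
  "x \<in> set (parents b) \<Longrightarrow> y \<in> set (parents x) \<Longrightarrow> y \<in> set (dfs parents (Suc (Suc k)) b)"
  using self_in_dfs[of y parents k] by auto

lemma set_dfs_subset:
  "(\<And>b. b \<in> B \<Longrightarrow> set (parents b) \<subseteq> B) \<Longrightarrow> b \<in> B \<Longrightarrow> set (dfs parents k b) \<subseteq> B"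
  by (induction k arbitrary: b) auto

locale block_dag =
  fixes f :: nat and V Byz :: "'v set" and B :: "'b set"
    and author :: "'b \<Rightarrow> 'v" and round :: "'b \<Rightarrow> nat" and parents :: "'b \<Rightarrow> 'b list"
  assumes finite_V: "finite V"
    and card_V: "card V = 3 * f + 1"
    and Byz_subset: "Byz \<subseteq> V"
    and card_Byz: "card Byz \<le> f"
    and honest_block_unique: "v \<in> V - Byz \<Longrightarrow> \<exists>!b. b \<in> B \<and> author b = v \<and> round b = k"
    and author_in_V: "b \<in> B \<Longrightarrow> author b \<in> V"
    and parents_in_B: "b \<in> B \<Longrightarrow> set (parents b) \<subseteq> B"
    and round_parent: "b \<in> B \<Longrightarrow> p \<in> set (parents b) \<Longrightarrow> round p + 1 = round b"
    and card_parent_authors: "b \<in> B \<Longrightarrow> 0 < round b \<Longrightarrow> 2 * f + 1 \<le> card (author ` set (parents b))"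

lemma block_dag_if_valid_dag:
  "valid_dag f V Byz B author round parents \<Longrightarrow> block_dag f V Byz B author round parents"
  unfolding valid_dag_def by unfold_locales blast+

context block_dag
begin

abbreviation honest :: "'v set" where
  "honest \<equiv> V - Byz"

lemma card_honest: "card honest + card Byz = 3 * f + 1"
  using card_Diff_subset[OF finite_subset[OF Byz_subset finite_V] Byz_subset]
    card_mono[OF finite_V Byz_subset] card_V
  by simp

definition block_of :: "nat \<Rightarrow> 'v \<Rightarrow> 'b" where
  "block_of k v = (THE b. b \<in> B \<and> author b = v \<and> round b = k)"

lemma block_of:
  "v \<in> honest \<Longrightarrow> block_of k v \<in> B \<and> author (block_of k v) = v \<and> round (block_of k v) = k"
  unfolding block_of_def by (rule theI'[OF honest_block_unique])

lemma eq_block_of: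
  "v \<in> honest \<Longrightarrow> b \<in> B \<Longrightarrow> author b = v \<Longrightarrow> round b = k \<Longrightarrow> b = block_of k v"
  unfolding block_of_def by (rule the1_equality[symmetric, OF honest_block_unique]) auto

lemma block_of_in_parents:
  assumes "b \<in> B" "round b = Suc k" "v \<in> honest" "v \<in> author ` set (parents b)"
  shows "block_of k v \<in> set (parents b)"
proof -
  obtain p where p: "p \<in> set (parents b)" "author p = v"
    using assms(4) by blast
  have "p = block_of k v"
    using p assms parents_in_B round_parent[OF assms(1) p(1)] by (intro eq_block_of) auto
  then show ?thesis
    using p by simp
qed

lemma card_honest_minus_parent_authors:
  assumes "b \<in> B" "0 < round b"
  shows "card (honest - author ` set (parents b)) \<le> f"
proof -
  let ?A = "author ` set (parents b)"
  have "?A \<subseteq> (honest \<inter> ?A) \<union> Byz"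
    using assms(1) author_in_V parents_in_B by blast
  then have "card ?A \<le> card ((honest \<inter> ?A) \<union> Byz)"
    using finite_V Byz_subset finite_subset by (intro card_mono) auto
  also have "\<dots> \<le> card (honest \<inter> ?A) + card Byz"
    by (rule card_Un_le)
  finally have "card ?A \<le> card (honest \<inter> ?A) + card Byz" .
  moreover have "card honest = card (honest \<inter> ?A) + card (honest - ?A)"
    using finite_V by (intro card_Int_Diff) simp
  ultimately show ?thesis
    using card_parent_authors[OF assms] card_honest by linarith
qed

lemma quorum_meets_parent_authors:
  assumes "Q \<subseteq> honest" "f < card Q" "b \<in> B" "0 < round b"
  shows "\<exists>v \<in> Q. v \<in> author ` set (parents b)"
proof (rule ccontr)
  assume "\<not> ?thesis"
  then have "Q \<subseteq> honest - author ` set (parents b)"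
    using assms(1) by blast
  then have "card Q \<le> card (honest - author ` set (parents b))"
    using finite_V by (intro card_mono) auto
  also have "\<dots> \<le> f"
    using assms(3,4) by (rule card_honest_minus_parent_authors)
  finally show False
    using assms(2) by simp
qed

lemma card_honest_parents:
  assumes "b \<in> B" "round b = Suc k"
  shows "f < card {v \<in> honest. block_of k v \<in> set (parents b)}"
proof -
  let ?A = "author ` set (parents b)"
  have "honest \<inter> ?A \<subseteq> {v \<in> honest. block_of k v \<in> set (parents b)}"
    using block_of_in_parents[OF assms] by blast
  then have "card (honest \<inter> ?A) \<le> card {v \<in> honest. block_of k v \<in> set (parents b)}"
    using finite_V by (intro card_mono) auto
  moreover have "card honest = card (honest \<inter> ?A) + card (honest - ?A)"
    using finite_V by (intro card_Int_Diff) simp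
  ultimately show ?thesis
    using card_honest_minus_parent_authors[of b] assms card_honest card_Byz by simp
qed

lemma honest_block_in_dfs_is_vote:
  assumes "v \<in> honest" "b \<in> B" "k < round b" "block_of k v \<in> set (dfs parents (round b) b)"
  shows "is_vote author round parents b (block_of k v)"
proof -
  have block: "author (block_of k v) = v" "round (block_of k v) = k"
    using block_of[OF assms(1)] by simp_all
  have unique: "x = block_of k v"
    if "x \<in> set (dfs parents (round b) b)" "author x = v \<and> round x = k" for x
    using that assms(1,2) set_dfs_subset[of B parents] parents_in_B by (intro eq_block_of) auto
  have "find (\<lambda>x. author x = v \<and> round x = k) (dfs parents (round b) b) = Some (block_of k v)"
    using assms(4) block unique by (intro find_eq_Some_if_unique) blast+
  then show ?thesis
    unfolding is_vote_def block using assms(3) by simp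
qed

lemma certificate_if_all_parents_vote:
  assumes "c \<in> B" "round c = round L + 3"
    and "\<And>p. p \<in> set (parents c) \<Longrightarrow> is_vote author round parents p L"
  shows "is_certificate f author round parents L c"
proof -
  have "{p \<in> set (parents c). round p = round L + 2 \<and> is_vote author round parents p L}
        = set (parents c)"
    using assms round_parent by fastforce
  moreover have "2 * f + 1 \<le> card (set (parents c))"
    using card_parent_authors[of c] card_image_le[of "set (parents c)" author] assms(1,2) by simp
  ultimately show ?thesis
    unfolding is_certificate_def using assms(2) by simp
qed

lemma honest_nonempty: "honest \<noteq> {}"
proof -
  have "card honest \<noteq> 0"
    using card_honest card_Byz by linarith
  then show ?thesis
    by (metis card.empty)
qed

lemma block_voted_by_whole_round:
  "\<exists>b \<in> B. round b = r \<and> (\<forall>p \<in> B. round p = r + 2 \<longrightarrow> is_vote author round parents p b)"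
proof -
  obtain v where v: "v \<in> honest"
    and card_Q: "f < card {u \<in> honest. block_of r v \<in> set (parents (block_of (Suc r) u))}"
    using ex_in_degree_gt[of honest f "\<lambda>u v. block_of r v \<in> set (parents (block_of (Suc r) u))"]
      finite_V honest_nonempty block_of card_honest_parents by auto
  let ?b = "block_of r v"
  have "is_vote author round parents p ?b" if p: "p \<in> B" "round p = r + 2" for p
  proof -
    obtain u where u: "u \<in> honest" "?b \<in> set (parents (block_of (Suc r) u))"
      "u \<in> author ` set (parents p)"
      using quorum_meets_parent_authors[OF _ card_Q p(1)] p(2) by auto
    then have "block_of (Suc r) u \<in> set (parents p)"
      using p by (intro block_of_in_parents) auto
    then have "?b \<in> set (dfs parents (round p) p)"
      using u(2) p(2) grandparent_in_dfs by simp
    then show ?thesis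
      using v p by (intro honest_block_in_dfs_is_vote) auto
  qed
  then show ?thesis
    using block_of[OF v] by blast
qed

lemma many_blocks_in_round: "\<exists>C. C \<subseteq> {c \<in> B. round c = k} \<and> finite C \<and> 2 * f + 1 \<le> card C"
proof -
  obtain w where w: "w \<in> honest"
    using honest_nonempty by blast
  let ?b = "block_of (Suc k) w"
  have "set (parents ?b) \<subseteq> {c \<in> B. round c = k}"
    using block_of[OF w] parents_in_B round_parent by fastforce
  moreover have "2 * f + 1 \<le> card (set (parents ?b))"
    using card_parent_authors[of ?b] card_image_le[of "set (parents ?b)" author] block_of[OF w]
    by fastforce
  ultimately show ?thesis
    by blast
qed

lemma block_certified_by_whole_round:
  "\<exists>b \<in> B. round b = r \<and> (\<forall>c \<in> B. round c = r + 3 \<longrightarrow> is_certificate f author round parents b c)"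
proof -
  obtain b where b: "b \<in> B" "round b = r"
    and votes: "\<And>p. p \<in> B \<Longrightarrow> round p = r + 2 \<Longrightarrow> is_vote author round parents p b"
    using block_voted_by_whole_round by blast
  have "is_certificate f author round parents b c" if c: "c \<in> B" "round c = r + 3" for c
  proof (rule certificate_if_all_parents_vote)
    show "c \<in> B" "round c = round b + 3"
      using c b(2) by auto
    fix p
    assume "p \<in> set (parents c)"
    then show "is_vote author round parents p b"
      using c parents_in_B round_parent[OF c(1)] by (intro votes) auto
  qed
  then show ?thesis
    using b by blast
qed

end

theorem lemma15:
  fixes f :: nat and V Byz :: "'v set" and B :: "'b set"
    and author :: "'b \<Rightarrow> 'v" and round :: "'b \<Rightarrow> nat" and parents :: "'b \<Rightarrow> 'b list"
  assumes "valid_dag f V Byz B author round parents"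
  shows "\<forall>r. \<exists>b \<in> B. round b = r \<and>
           (\<exists>C. C \<subseteq> {c \<in> B. is_certificate f author round parents b c} \<and>
                finite C \<and> 2 * f + 1 \<le> card C)"
proof
  fix r
  interpret block_dag f V Byz B author round parents
    using assms by (rule block_dag_if_valid_dag)
  obtain b where "b \<in> B" "round b = r"
    and "\<forall>c \<in> B. round c = r + 3 \<longrightarrow> is_certificate f author round parents b c"
    using block_certified_by_whole_round by blast
  moreover obtain C where "C \<subseteq> {c \<in> B. round c = r + 3}" "finite C" "2 * f + 1 \<le> card C"
    using many_blocks_in_round by blast
  ultimately show "\<exists>b \<in> B. round b = r \<and>
           (\<exists>C. C \<subseteq> {c \<in> B. is_certificate f author round parents b c} \<and>
                finite C \<and> 2 * f + 1 \<le> card C)"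
    by blast
qed

end
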